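(* Let $f_1=(a_1,\lambda_1),\dots,f_p=(a_p,\lambda_p)\in\mathcal{H}(n,\mathbb{C})\setminus\mathcal{SR}_n$ and let $G$ be the subgroup of $\mathcal{H}(n,\mathbb{C})$ generated by $f_1,\dots,f_p$. Then $E_G$ is the complex affine subspace of $\mathbb{C}^n$ generated by $\{a_1,\dots,a_p\}$.
   Context: $\mathcal{H}(n,\mathbb{C})$ is the group of maps $z\mapsto\lambda z+b$ of $\mathbb{C}^n$ with $\lambda\in\mathbb{C}^*$, $b\in\mathbb{C}^n$; $\mathcal{T}_n$ = translations. For $a\in\mathbb{C}^n$, $\lambda\in\mathbb{C}\setminus\{0,1\}$, $(a,\lambda)$ denotes $z\mapsto\lambda(z-a)+a$, with unique fixed point (center) $a$. $H_2=(\frac{\pi}{2}+\pi\mathbb{Z})\cup\pi\mathbb{Z}$, $F_2=\{e^{ix}:x\in H_2\}$, $H_3=(\frac{\pi}{3}+\pi\mathbb{Z})\cup(-\frac{\pi}{3}+\pi\mathbb{Z})\cup\pi\mathbb{Z}$, $F_3=\{e^{ix}:x\in H_3\}$; $\mathcal{S}_i\mathcal{R}_n=\{z\mapsto\lambda z+b:\lambda\in F_i, b\in\mathbb{C}^n\}$, $\mathcal{SR}_n=\mathcal{S}_2\mathcal{R}_n\cup\mathcal{S}_3\mathcal{R}_n$. For a subgroup $G$, $\Gamma_G$ is the set of centers of elements of $G\setminus\mathcal{T}_n$ and $E_G$ is the smallest complex affine subspace of $\mathbb{C}^n$ containing $\Gamma_G$. *)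

theory Defs
  imports "HOL-Analysis.Analysis"
begin

text \<open>Points of C^n are modelled as complex^'n (n = CARD('n)).\<close>

definition affmap :: "complex \<Rightarrow> complex^'n \<Rightarrow> (complex^'n \<Rightarrow> complex^'n)" where
  "affmap lam b = (\<lambda>z. lam *s z + b)"

definition Hgrp :: "(complex^'n \<Rightarrow> complex^'n) set" where
  "Hgrp = {affmap lam b | lam b. lam \<noteq> 0}"

definition Transl :: "(complex^'n \<Rightarrow> complex^'n) set" where
  "Transl = {affmap 1 b | b. True}"

definition homot :: "complex^'n \<Rightarrow> complex \<Rightarrow> (complex^'n \<Rightarrow> complex^'n)" where
  "homot a lam = (\<lambda>z. lam *s (z - a) + a)"

definition H2 :: "real set" where
  "H2 = {x. \<exists>k::int. x = pi/2 + pi * of_int k} \<union> {x. \<exists>k::int. x = pi * of_int k}"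

definition H3 :: "real set" where
  "H3 = {x. \<exists>k::int. x = pi/3 + pi * of_int k} \<union> {x. \<exists>k::int. x = - pi/3 + pi * of_int k}
        \<union> {x. \<exists>k::int. x = pi * of_int k}"

definition F2 :: "complex set" where "F2 = (\<lambda>x. exp (\<i> * of_real x)) ` H2"
definition F3 :: "complex set" where "F3 = (\<lambda>x. exp (\<i> * of_real x)) ` H3"

definition S2R :: "(complex^'n \<Rightarrow> complex^'n) set" where
  "S2R = {affmap lam b | lam b. lam \<in> F2}"
definition S3R :: "(complex^'n \<Rightarrow> complex^'n) set" where
  "S3R = {affmap lam b | lam b. lam \<in> F3}"
definition SR :: "(complex^'n \<Rightarrow> complex^'n) set" where
  "SR = S2R \<union> S3R"

inductive_set gen_group :: "('a \<Rightarrow> 'a) set \<Rightarrow> ('a \<Rightarrow> 'a) set" for S where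
  gen_id: "id \<in> gen_group S"
| gen_base: "f \<in> S \<Longrightarrow> f \<in> gen_group S"
| gen_inv: "f \<in> gen_group S \<Longrightarrow> inv f \<in> gen_group S"
| gen_comp: "f \<in> gen_group S \<Longrightarrow> g \<in> gen_group S \<Longrightarrow> f \<circ> g \<in> gen_group S"

definition Gamma :: "(complex^'n \<Rightarrow> complex^'n) set \<Rightarrow> (complex^'n) set" where
  "Gamma G = {c. \<exists>g\<in>G - Transl. g c = c}"

definition caffine :: "(complex^'n) set \<Rightarrow> bool" where
  "caffine S \<longleftrightarrow> (\<forall>x\<in>S. \<forall>y\<in>S. \<forall>u::complex. (1 - u) *s x + u *s y \<in> S)"

definition E_of :: "(complex^'n \<Rightarrow> complex^'n) set \<Rightarrow> (complex^'n) set" where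
  "E_of G = caffine hull (Gamma G)"

end

theory Submission
  imports Defs
begin

(* Let A be the complex affine hull of the centers a_i.  The proof compares
   A with Gamma(G), the set of fixed points of non-translations in G.

   (1) Every generator (a_i, lambda_i) is an invertible affine map fixing a_i
       with a_i in A, so it maps A onto itself (in the strong sense
       f x \<in> A \<longleftrightarrow> x \<in> A).  This stabiliser property survives composition
       and inversion, hence holds for all of G.
   (2) If g = lambda z + b with lambda \<noteq> 1 stabilises A and fixes c, then for
       any x \<in> A the point c is an affine combination of x and g x, so c \<in> A.
       Thus Gamma(G) \<subseteq> A, and E_G \<subseteq> A by minimality of the hull.
   (3) Conversely each a_i is the center of the non-translation generator f_i,
       so a_i \<in> Gamma(G) and A \<subseteq> E_G. *)

lemma homot_affmap: "homot a l = affmap l ((1 - l) *s a)"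
  by (rule ext) (simp add: homot_def affmap_def vec_eq_iff algebra_simps)

lemma affmap_comp: "affmap l b \<circ> affmap m c = affmap (l * m) (l *s c + b)"
  by (rule ext) (simp add: affmap_def vec_eq_iff algebra_simps)

lemma id_affmap: "id = affmap 1 0"
  by (rule ext) (simp add: affmap_def)

lemma affmap_inverse:
  assumes "l \<noteq> 0"
  shows "affmap l b \<circ> affmap (1/l) (- ((1/l) *s b)) = id"
    and "affmap (1/l) (- ((1/l) *s b)) \<circ> affmap l b = id"
  using assms by (auto intro!: ext simp: affmap_def vec_eq_iff field_simps)

lemma Hgrp_bij:
  assumes "f \<in> Hgrp"
  shows "bij f"
proof -
  obtain l b where "l \<noteq> 0" "f = affmap l b" using assms by (auto simp: Hgrp_def)
  then show ?thesis using affmap_inverse o_bij by metis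
qed

lemma Hgrp_comp:
  assumes "f \<in> Hgrp" "g \<in> Hgrp"
  shows "f \<circ> g \<in> Hgrp"
proof -
  obtain l b m c where "l \<noteq> 0" "f = affmap l b" "m \<noteq> 0" "g = affmap m c"
    using assms by (auto simp: Hgrp_def)
  then have "l * m \<noteq> 0" "f \<circ> g = affmap (l * m) (l *s c + b)" by (simp_all add: affmap_comp)
  then show ?thesis unfolding Hgrp_def by blast
qed

lemma Hgrp_inv:
  assumes "f \<in> Hgrp"
  shows "inv f \<in> Hgrp"
proof -
  obtain l b where lb: "l \<noteq> 0" "f = affmap l b" using assms by (auto simp: Hgrp_def)
  then have "inv f = affmap (1/l) (- ((1/l) *s b))"
    using affmap_inverse inv_unique_comp by metis
  then show ?thesis using lb(1) by (auto simp: Hgrp_def)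
qed

lemma gen_group_Hgrp:
  assumes "S \<subseteq> Hgrp"
  shows "gen_group S \<subseteq> Hgrp"
proof
  fix g assume "g \<in> gen_group S"
  then show "g \<in> Hgrp"
  proof (induction rule: gen_group.induct)
    case gen_id
    show ?case unfolding Hgrp_def id_affmap by auto
  qed (use assms Hgrp_comp Hgrp_inv in blast)+
qed

lemma affmap_not_Transl: "affmap l b \<notin> Transl \<Longrightarrow> l \<noteq> 1"
  by (auto simp: Transl_def)

lemma Gamma_trivial_group: "Gamma (gen_group {}) = {}"
proof -
  have "g = id" if "g \<in> gen_group {}" for g :: "complex^'n \<Rightarrow> complex^'n"
    using that by (induction rule: gen_group.induct) (auto simp: inv_id)
  then show ?thesis by (auto simp: Gamma_def Transl_def id_affmap)
qed

definition stabilises :: "('a \<Rightarrow> 'a) \<Rightarrow> 'a set \<Rightarrow> bool" where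
  "stabilises f A \<longleftrightarrow> (\<forall>x. f x \<in> A \<longleftrightarrow> x \<in> A)"

text \<open>Bijections stabilising A form a group, so the generated group inherits
  the property from its generators.\<close>
lemma gen_group_stabilises:
  assumes "S \<subseteq> Hgrp" and "\<And>f. f \<in> S \<Longrightarrow> stabilises f A" and "g \<in> gen_group S"
  shows "stabilises g A"
  using assms(3)
proof (induction rule: gen_group.induct)
  case (gen_inv f)
  have "surj f" using Hgrp_bij gen_group_Hgrp[OF assms(1)] gen_inv.hyps bij_is_surj by blast
  then have "f (inv f x) = x" for x by (rule surj_f_inv_f)
  then show ?case using gen_inv.IH unfolding stabilises_def by metis
qed (use assms(2) in \<open>auto simp: stabilises_def\<close>)

lemma caffine_hull_caffine: "caffine (caffine hull S)"
  by (rule hull_in) (auto simp: caffine_def)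

text \<open>A homothety centred in a complex affine subspace stabilises it, because
  h(x) = (1 - l) a + l x and conversely x = (1 - 1/l) a + (1/l) h(x).\<close>
lemma homot_stabilises:
  assumes "caffine A" "a \<in> A" "l \<noteq> 0"
  shows "stabilises (homot a l) A"
  unfolding stabilises_def
proof
  fix x
  have fwd: "homot a l x = (1 - l) *s a + l *s x"
    by (simp add: homot_def vec_eq_iff algebra_simps)
  have bwd: "x = (1 - 1/l) *s a + (1/l) *s homot a l x"
    using assms(3) by (simp add: homot_def vec_eq_iff field_simps)
  show "homot a l x \<in> A \<longleftrightarrow> x \<in> A"
    using assms(1,2) fwd bwd unfolding caffine_def by metis
qed

lemma fixed_point_affine_comb:
  assumes "l \<noteq> 1" "l *s c + b = (c::complex^'n)"
  shows "c = (1 - 1/(1-l)) *s x + (1/(1-l)) *s (l *s x + b)"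
proof -
  have "b $ i = c $ i - l * c $ i" for i
    using assms(2) by (simp add: vec_eq_iff) (metis add_diff_cancel_left')
  then show ?thesis using assms(1) by (simp add: vec_eq_iff field_simps)
qed

lemma center_in_stabilised:
  assumes "caffine A" "A \<noteq> {}" "stabilises (affmap l b) A" "l \<noteq> 1"
    and "affmap l b c = c"
  shows "c \<in> A"
proof -
  obtain x where x: "x \<in> A" using assms(2) by blast
  then have gx: "l *s x + b \<in> A" using assms(3) by (simp add: stabilises_def affmap_def)
  have "c = (1 - 1/(1-l)) *s x + (1/(1-l)) *s (l *s x + b)"
    using fixed_point_affine_comb assms(4,5) by (simp add: affmap_def)
  then show ?thesis using assms(1) x gx unfolding caffine_def by metis
qed

lemma Gamma_subset_stabilised:
  assumes "caffine A" "A \<noteq> {}" "S \<subseteq> Hgrp" "\<And>f. f \<in> S \<Longrightarrow> stabilises f A"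
  shows "Gamma (gen_group S) \<subseteq> A"
proof
  fix c assume "c \<in> Gamma (gen_group S)"
  then obtain g where g: "g \<in> gen_group S" "g \<notin> Transl" "g c = c" by (auto simp: Gamma_def)
  obtain l b where lb: "g = affmap l b" using g(1) gen_group_Hgrp[OF assms(3)] by (auto simp: Hgrp_def)
  have "stabilises g A" using gen_group_stabilises[OF assms(3,4) g(1)] .
  moreover have "l \<noteq> 1" using affmap_not_Transl g(2) lb by simp
  ultimately show "c \<in> A"
    using center_in_stabilised[OF assms(1,2)] g(3) lb by simp
qed

lemma homot_not_Transl:
  fixes a :: "complex^'n"
  assumes "l \<noteq> 1"
  shows "homot a l \<notin> Transl"
proof
  assume "homot a l \<in> Transl"
  then obtain b where h: "homot a l = affmap 1 b" by (auto simp: Transl_def)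
  have "b = 0" using fun_cong[OF h, of a] by (simp add: homot_def affmap_def)
  then have "l *s (1::complex^'n) = 1" using fun_cong[OF h, of "a + 1"] by (simp add: homot_def affmap_def)
  then show False using assms by (simp add: vec_eq_iff)
qed

lemma centers_in_Gamma:
  assumes "i \<in> I" "lam i \<noteq> 1"
  shows "a i \<in> Gamma (gen_group ((\<lambda>i. homot (a i) (lam i)) ` I))"
proof -
  have "homot (a i) (lam i) \<in> gen_group ((\<lambda>i. homot (a i) (lam i)) ` I)"
    using assms(1) by (auto intro: gen_base)
  moreover have "homot (a i) (lam i) \<notin> Transl" using assms(2) homot_not_Transl by blast
  moreover have "homot (a i) (lam i) (a i) = a i" by (simp add: homot_def)
  ultimately show ?thesis unfolding Gamma_def by blast
qed

theorem E_of_homothety_group: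
  assumes "\<forall>i\<in>I. lam i \<noteq> 0 \<and> lam i \<noteq> 1"
  shows "E_of (gen_group ((\<lambda>i. homot (a i) (lam i)) ` I)) = caffine hull (a ` I)"
proof -
  define S where "S = (\<lambda>i. homot (a i) (lam i)) ` I"
  define A where "A = caffine hull (a ` I)"
  have centers: "a ` I \<subseteq> Gamma (gen_group S)"
    using assms centers_in_Gamma[of _ I lam a] by (auto simp: S_def)
  have "Gamma (gen_group S) \<subseteq> A"
  proof (cases "I = {}")
    case True
    then show ?thesis by (simp add: S_def Gamma_trivial_group)
  next
    case False
    have "A \<noteq> {}" using False by (auto simp: A_def intro: hull_inc)
    moreover have "S \<subseteq> Hgrp"
    proof
      fix f assume "f \<in> S"
      then obtain i where "i \<in> I" "f = affmap (lam i) ((1 - lam i) *s a i)"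
        by (auto simp: S_def homot_affmap)
      then show "f \<in> Hgrp" using assms unfolding Hgrp_def by blast
    qed
    moreover have "stabilises f A" if "f \<in> S" for f
    proof -
      obtain i where i: "i \<in> I" "f = homot (a i) (lam i)" using \<open>f \<in> S\<close> by (auto simp: S_def)
      have "a i \<in> A" unfolding A_def using i(1) by (simp add: hull_inc)
      then show ?thesis
        using i assms homot_stabilises[OF caffine_hull_caffine[of "a ` I"]] by (simp add: A_def)
    qed
    ultimately show ?thesis
      unfolding A_def by (rule Gamma_subset_stabilised[OF caffine_hull_caffine])
  qed
  then have "E_of (gen_group S) \<subseteq> A"
    unfolding E_of_def by (rule hull_minimal) (simp add: A_def caffine_hull_caffine)
  moreover have "A \<subseteq> E_of (gen_group S)"
    unfolding E_of_def A_def using centers by (rule hull_mono)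
  ultimately show ?thesis by (simp add: S_def A_def)
qed

theorem lemma2p7:
  fixes p :: nat and a :: "nat \<Rightarrow> complex^'n" and lam :: "nat \<Rightarrow> complex"
  assumes "\<forall>i\<in>{1..p}. lam i \<noteq> 0 \<and> lam i \<noteq> 1"
    and "\<forall>i\<in>{1..p}. homot (a i) (lam i) \<notin> SR"
  shows "E_of (gen_group ((\<lambda>i. homot (a i) (lam i)) ` {1..p})) = caffine hull (a ` {1..p})"
  using E_of_homothety_group assms(1) .

end
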